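(* For a Pólya tree $t$ with $k$ nodes let $\tilde\rho=1+\epsilon$ be the smallest positive real number satisfying $\int_0^{\tilde\rho} e^{-w(t)v^k}\,dv = 1$. Then, as $k\to\infty$ (with $t$ ranging over Pólya trees of size $k$), \[ \tilde\rho = 1+\epsilon \sim 1 + \frac{w(t)}{k}, \quad\text{i.e. } \epsilon \sim \frac{w(t)}{k}. \]
   Context: A Pólya tree is an unlabeled rooted non-plane tree. For a Pólya tree $t$ with $k$ nodes, $\ell(t)$ is the number of labelings of its nodes by $1,\dots,k$ that increase along every path from the root, and $w(t)=\ell(t)/k!$. The number $\tilde\rho$ is the dominant singularity of $S_t(z)=\ln\frac{1}{1-\int_0^z e^{-w(t)v^k}\,dv}-w(t)z^k$, the exponential generating function of recursive trees having no fringe subtree of shape $t$. *)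

theory Defs
  imports "HOL-Analysis.Analysis" "HOL-Library.Multiset"
begin

text \<open>Polya trees: unlabeled rooted non-plane trees (children form a multiset).\<close>
datatype ptree = PNode "ptree multiset"

primrec psize :: "ptree \<Rightarrow> nat" where
  "psize (PNode M) = Suc (sum_mset (image_mset psize M))"

datatype ltree = LNode nat "ltree multiset"

primrec lroot :: "ltree \<Rightarrow> nat" where
  "lroot (LNode a M) = a"

primrec shape :: "ltree \<Rightarrow> ptree" where
  "shape (LNode a M) = PNode (image_mset shape M)"

primrec labels :: "ltree \<Rightarrow> nat multiset" where
  "labels (LNode a M) = add_mset a (sum_mset (image_mset labels M))"

primrec increasing :: "ltree \<Rightarrow> bool" where
  "increasing (LNode a M) =
     (\<forall>p \<in># image_mset (\<lambda>T. (lroot T, increasing T)) M. a < fst p \<and> snd p)"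

text \<open>\<open>\<ell>(t)\<close>: the number of increasing labellings of the nodes of \<open>t\<close> by \<open>1,\<dots>,k\<close>
  (i.e. the number of recursive trees of shape \<open>t\<close>).\<close>
definition num_incr_labellings :: "ptree \<Rightarrow> nat" where
  "num_incr_labellings t =
     card {T. shape T = t \<and> increasing T \<and> labels T = mset_set {1..psize t}}"

definition w :: "ptree \<Rightarrow> real" where
  "w t = real (num_incr_labellings t) / fact (psize t)"

definition rho_tilde :: "ptree \<Rightarrow> real" where
  "rho_tilde t = Inf {r. r > 0 \<and>
      integral {0..r} (\<lambda>v. exp (- w t * v ^ psize t)) = 1}"

end

theory Submission
  imports Defs
begin

(*
  w(t) = l(t)/k! lies in (0, 1/k]: some increasing labelling of t exists, and an increasing tree
  with label set {1..k} is determined by its parent map j |-> p(j) < j (2 <= j <= k), of which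
  there are (k-1)!.

  Put a = w(t) and F(r) = int_0^r exp(-a v^k) dv. From 1 - x <= exp(-x) <= 1 - x exp(-a) on
  [0, a] we get 1 - a/(k+1) <= F(1) <= 1 - a(1-a)/(k+1). F is strictly increasing and exceeds 1
  at 1 + 2a/k, where the integrand is still at least 1 - 2a. Hence the root rho = 1 + eps is
  unique, and 1 - F(1) = int_1^rho exp(-a v^k) dv lies in [eps (1-2a), eps], so that
  a(1-a)/(k+1) <= eps <= a/((k+1)(1-2a)); with a <= 1/k this gives |eps k/a - 1| <= 3/k.
*)

section \<open>Counting increasing labellings\<close>

lemma multiset_eq_if_set_mset_eq:
  assumes "set_mset M1 = set_mset M2" "\<And>x. count M1 x \<le> 1" "\<And>x. count M2 x \<le> 1"
  shows "M1 = M2"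
proof (rule multiset_eqI)
  fix x
  have "0 < count M1 x \<longleftrightarrow> 0 < count M2 x"
    using assms(1) by (metis count_greater_zero_iff)
  then show "count M1 x = count M2 x"
    using assms(2,3)[of x] by presburger
qed

definition distinct_labels :: "ltree \<Rightarrow> bool" where
  "distinct_labels T \<longleftrightarrow> (\<forall>x. count (labels T) x \<le> 1)"

primrec edges :: "ltree \<Rightarrow> (nat \<times> nat) set" where
  "edges (LNode a M) = \<Union> (set_mset (image_mset (\<lambda>C. insert (a, lroot C) (edges C)) M))"

lemma lroot_in_labels: "lroot T \<in># labels T"
  by (cases T) auto

lemma labels_child_subseteq:
  assumes "C \<in># M"
  shows "add_mset a (labels C) \<subseteq># labels (LNode a M)"
proof -
  obtain M' where "M = add_mset C M'"
    using multi_member_split[OF assms] by blast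
  then show ?thesis by simp
qed

lemma labels_two_children_subseteq:
  assumes "C \<in># M" "C' \<in># M - {#C#}"
  shows "labels C + labels C' \<subseteq># labels (LNode a M)"
proof -
  obtain M' where M': "M = add_mset C M'"
    using multi_member_split[OF assms(1)] by blast
  then obtain M'' where "M' = add_mset C' M''"
    using multi_member_split[of C' M'] assms(2) by auto
  then have "labels (LNode a M) = (labels C + labels C') + add_mset a (sum_mset (image_mset labels M''))"
    using M' by (simp add: ac_simps)
  then show ?thesis
    by (simp only: mset_subset_eq_add_left)
qed

lemma distinct_labels_child:
  assumes "distinct_labels (LNode a M)" "C \<in># M"
  shows "distinct_labels C" "a \<notin># labels C"
proof -
  have le: "count (add_mset a (labels C)) x \<le> 1" for x
    using mset_subset_eq_count[OF labels_child_subseteq[OF assms(2), of a], of x] assms(1)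
    unfolding distinct_labels_def by (meson order_trans)
  show "distinct_labels C"
    unfolding distinct_labels_def
  proof
    fix x
    have "count (labels C) x \<le> count (add_mset a (labels C)) x"
      by simp
    then show "count (labels C) x \<le> 1"
      using le[of x] by linarith
  qed
  show "a \<notin># labels C"
    using le[of a] by (simp add: count_eq_zero_iff[symmetric])
qed

lemma distinct_labels_children_eq:
  assumes "distinct_labels (LNode a M)" "C \<in># M" "C' \<in># M" "x \<in># labels C" "x \<in># labels C'"
  shows "C = C'"
proof (rule ccontr)
  assume "C \<noteq> C'"
  then have "C' \<in># M - {#C#}"
    using assms(3) by (simp add: in_diff_count)
  then have "count (labels C + labels C') x \<le> count (labels (LNode a M)) x"
    using assms(2) by (intro mset_subset_eq_count labels_two_children_subseteq)
  moreover have "count (labels (LNode a M)) x \<le> 1"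
    using assms(1) unfolding distinct_labels_def by blast
  ultimately show False
    using assms(4,5) by (simp add: count_greater_zero_iff[symmetric] del: count_greater_zero_iff)
qed

lemma distinct_labels_count_child:
  assumes "distinct_labels (LNode a M)"
  shows "count M C \<le> 1"
proof (rule ccontr)
  assume "\<not> count M C \<le> 1"
  then have "C \<in># M - {#C#}"
    by (simp add: in_diff_count)
  then have "C \<in># M" "C \<in># M - {#C#}"
    using in_diffD by auto
  then have "count (labels C + labels C) (lroot C) \<le> count (labels (LNode a M)) (lroot C)"
    by (intro mset_subset_eq_count labels_two_children_subseteq)
  moreover have "count (labels (LNode a M)) (lroot C) \<le> 1"
    using assms unfolding distinct_labels_def by blast
  ultimately show False
    using lroot_in_labels[of C] by (simp add: count_greater_zero_iff[symmetric] del: count_greater_zero_iff)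
qed

lemma edges_in_labels: "(x, y) \<in> edges T \<Longrightarrow> x \<in># labels T \<and> y \<in># labels T"
proof (induction T arbitrary: x y)
  case (LNode a M)
  then obtain C where "C \<in># M" "(x, y) = (a, lroot C) \<or> (x, y) \<in> edges C"
    by auto
  with LNode.IH show ?case
    using lroot_in_labels[of C] by fastforce
qed

lemma edge_target_ne_lroot:
  assumes "distinct_labels T" "(x, y) \<in> edges T"
  shows "y \<noteq> lroot T"
proof (cases T)
  case (LNode a M)
  with assms obtain C where C: "C \<in># M" "(x, y) = (a, lroot C) \<or> (x, y) \<in> edges C"
    by auto
  then have "y \<in># labels C"
    using lroot_in_labels edges_in_labels by auto
  then show ?thesis
    using distinct_labels_child(2)[OF assms(1)[unfolded LNode] C(1)] LNode by auto
qed

lemma edges_child: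
  assumes "distinct_labels (LNode a M)" "C \<in># M"
  shows "edges C = {e \<in> edges (LNode a M). fst e \<in># labels C}"
proof
  show "edges C \<subseteq> {e \<in> edges (LNode a M). fst e \<in># labels C}"
    using assms(2) edges_in_labels by fastforce
  show "{e \<in> edges (LNode a M). fst e \<in># labels C} \<subseteq> edges C"
  proof
    fix e
    assume e: "e \<in> {e \<in> edges (LNode a M). fst e \<in># labels C}"
    then obtain C' where C': "C' \<in># M" "e = (a, lroot C') \<or> e \<in> edges C'"
      by auto
    have "e \<in> edges C'"
      using C' e distinct_labels_child(2)[OF assms] by auto
    moreover have "C' = C"
      using distinct_labels_children_eq[OF assms(1) C'(1) assms(2)] edges_in_labels[of "fst e" "snd e" C']
        \<open>e \<in> edges C'\<close> e by auto
    ultimately show "e \<in> edges C"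
      by simp
  qed
qed

lemma edge_source_unique:
  "distinct_labels T \<Longrightarrow> (x, y) \<in> edges T \<Longrightarrow> (x', y) \<in> edges T \<Longrightarrow> x = x'"
proof (induction T)
  case (LNode a M)
  obtain C where C: "C \<in># M" "(x, y) = (a, lroot C) \<or> (x, y) \<in> edges C"
    using LNode.prems by auto
  obtain C' where C': "C' \<in># M" "(x', y) = (a, lroot C') \<or> (x', y) \<in> edges C'"
    using LNode.prems by auto
  have "y \<in># labels C" "y \<in># labels C'"
    using C C' lroot_in_labels edges_in_labels by auto
  then have "C' = C"
    using distinct_labels_children_eq[OF LNode.prems(1) C'(1) C(1)] by blast
  have dC: "distinct_labels C"
    using distinct_labels_child(1)[OF LNode.prems(1) C(1)] .
  show ?case
  proof (cases "y = lroot C")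
    case True
    then show ?thesis
      using C C' \<open>C' = C\<close> edge_target_ne_lroot[OF dC] by auto
  next
    case False
    then show ?thesis
      using C C' \<open>C' = C\<close> LNode.IH[OF C(1) dC] by auto
  qed
qed

lemma ex_edge_to_label:
  "y \<in># labels T \<Longrightarrow> y \<noteq> lroot T \<Longrightarrow> \<exists>x. (x, y) \<in> edges T"
proof (induction T)
  case (LNode a M)
  then obtain C where C: "C \<in># M" "y \<in># labels C"
    by auto
  show ?case
  proof (cases "y = lroot C")
    case True
    then show ?thesis using C by auto
  next
    case False
    then show ?thesis using C LNode.IH[OF C] by fastforce
  qed
qed

lemma lroot_rtrancl_edges: "y \<in># labels T \<Longrightarrow> (lroot T, y) \<in> (edges T)\<^sup>*"
proof (induction T)
  case (LNode a M)
  show ?case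
  proof (cases "y = a")
    case False
    then obtain C where C: "C \<in># M" "y \<in># labels C"
      using LNode.prems by auto
    have "(lroot C, y) \<in> (edges (LNode a M))\<^sup>*"
      using rtrancl_mono[of "edges C" "edges (LNode a M)"] LNode.IH[OF C] C(1) by auto
    moreover have "(a, lroot C) \<in> edges (LNode a M)"
      using C(1) by auto
    ultimately show ?thesis
      by (simp add: converse_rtrancl_into_rtrancl)
  qed simp
qed

lemma labels_child_eq_reachable:
  assumes "distinct_labels (LNode a M)" "C \<in># M"
  shows "set_mset (labels C) = {y. (lroot C, y) \<in> (edges (LNode a M))\<^sup>*}"
proof (intro equalityI subsetI; clarify)
  fix y
  assume "y \<in># labels C"
  then show "(lroot C, y) \<in> (edges (LNode a M))\<^sup>*"
    using rtrancl_mono[of "edges C" "edges (LNode a M)"] lroot_rtrancl_edges assms(2) by auto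
next
  fix y
  assume "(lroot C, y) \<in> (edges (LNode a M))\<^sup>*"
  then show "y \<in># labels C"
  proof (induction rule: rtrancl_induct)
    case (step y z)
    then have "(y, z) \<in> edges C"
      using edges_child[OF assms] by auto
    then show ?case
      using edges_in_labels by blast
  qed (simp add: lroot_in_labels)
qed

lemma edge_from_lroot_iff:
  assumes "distinct_labels (LNode a M)"
  shows "(a, y) \<in> edges (LNode a M) \<longleftrightarrow> y \<in> lroot ` set_mset M"
proof
  assume "(a, y) \<in> edges (LNode a M)"
  then obtain C where "C \<in># M" "(a, y) = (a, lroot C) \<or> (a, y) \<in> edges C"
    by auto
  then show "y \<in> lroot ` set_mset M"
    using distinct_labels_child(2)[OF assms] edges_in_labels by blast
qed auto

lemma distinct_labels_tree_eqI:
  "distinct_labels T1 \<Longrightarrow> distinct_labels T2 \<Longrightarrow> lroot T1 = lroot T2 \<Longrightarrow> edges T1 = edges T2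
    \<Longrightarrow> T1 = T2"
proof (induction T1 arbitrary: T2)
  case (LNode a M1)
  then obtain M2 where T2: "T2 = LNode a M2"
    by (cases T2) auto
  have d1: "distinct_labels (LNode a M1)" and d2: "distinct_labels (LNode a M2)"
    and E: "edges (LNode a M1) = edges (LNode a M2)"
    using LNode.prems T2 by auto
  have same: "C = D" if C: "C \<in># M1" and D: "D \<in># M2" and "lroot C = lroot D" for C D
  proof -
    have "set_mset (labels C) = set_mset (labels D)"
      using labels_child_eq_reachable[OF d1 C] labels_child_eq_reachable[OF d2 D] E \<open>lroot C = lroot D\<close>
      by simp
    have "edges C = {e \<in> edges (LNode a M1). fst e \<in># labels C}"
      by (rule edges_child[OF d1 C])
    also have "\<dots> = {e \<in> edges (LNode a M2). fst e \<in># labels D}"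
      by (simp only: E \<open>set_mset (labels C) = set_mset (labels D)\<close>)
    also have "\<dots> = edges D"
      by (rule edges_child[OF d2 D, symmetric])
    finally have "edges C = edges D" .
    then show "C = D"
      using LNode.IH[OF C distinct_labels_child(1)[OF d1 C] distinct_labels_child(1)[OF d2 D]]
        \<open>lroot C = lroot D\<close> by simp
  qed
  have roots: "lroot ` set_mset M1 = lroot ` set_mset M2"
    using edge_from_lroot_iff[OF d1] edge_from_lroot_iff[OF d2] E by blast
  have "set_mset M1 = set_mset M2"
  proof (intro equalityI subsetI)
    fix C
    assume "C \<in># M1"
    then obtain D where "D \<in># M2" "lroot C = lroot D"
      using roots by (metis image_iff)
    with \<open>C \<in># M1\<close> show "C \<in># M2"
      using same by blast
  next
    fix D
    assume "D \<in># M2"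
    then obtain C where "C \<in># M1" "lroot C = lroot D"
      using roots by (metis image_iff)
    with \<open>D \<in># M2\<close> show "D \<in># M1"
      using same by blast
  qed
  then have "M1 = M2"
    using distinct_labels_count_child[OF d1] distinct_labels_count_child[OF d2]
    by (rule multiset_eq_if_set_mset_eq)
  then show ?case
    using T2 by simp
qed

lemma increasing_child:
  assumes "increasing (LNode a M)" "C \<in># M"
  shows "a < lroot C" "increasing C"
  using assms by auto

lemma increasing_edge: "increasing T \<Longrightarrow> (x, y) \<in> edges T \<Longrightarrow> x < y"
proof (induction T)
  case (LNode a M)
  then obtain C where "C \<in># M" "(x, y) = (a, lroot C) \<or> (x, y) \<in> edges C"
    by auto
  with LNode.IH increasing_child[OF LNode.prems(1)] show ?case
    by auto
qed

lemma increasing_lroot_le: "increasing T \<Longrightarrow> y \<in># labels T \<Longrightarrow> lroot T \<le> y"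
proof (induction T)
  case (LNode a M)
  show ?case
  proof (cases "y = a")
    case False
    then obtain C where "C \<in># M" "y \<in># labels C"
      using LNode.prems(2) by auto
    with LNode.IH increasing_child[OF LNode.prems(1)] show ?thesis
      by fastforce
  qed simp
qed

lemma distinct_labels_mset_set: "labels T = mset_set A \<Longrightarrow> distinct_labels T"
  unfolding distinct_labels_def by (simp add: count_mset_set')

definition parent_fun :: "nat \<Rightarrow> ltree \<Rightarrow> nat \<Rightarrow> nat" where
  "parent_fun k T = restrict (\<lambda>j. THE i. (i, j) \<in> edges T) {2..k}"

context
  fixes T :: ltree and k :: nat
  assumes incr: "increasing T" and labels_eq: "labels T = mset_set {1..k}"
begin

lemma lroot_eq_one: "lroot T = 1"
  using lroot_in_labels[of T] increasing_lroot_le[OF incr, of 1] labels_eq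
  by (cases "k = 0") auto

lemma parent_fun_edge:
  assumes "j \<in> {2..k}"
  shows "(parent_fun k T j, j) \<in> edges T"
proof -
  obtain i where "(i, j) \<in> edges T"
    using ex_edge_to_label[of j T] assms labels_eq lroot_eq_one by auto
  moreover have "parent_fun k T j = i"
    using calculation edge_source_unique[OF distinct_labels_mset_set[OF labels_eq]] assms
    unfolding parent_fun_def by auto
  ultimately show ?thesis
    by simp
qed

lemma edges_eq_parent_fun: "edges T = {(parent_fun k T j, j) | j. j \<in> {2..k}}"
proof (intro equalityI subsetI)
  fix e
  assume e: "e \<in> edges T"
  obtain i j where ij: "e = (i, j)"
    by (cases e)
  have "j \<in># labels T" "j \<noteq> 1"
    using edges_in_labels[of i j T] edge_target_ne_lroot[OF distinct_labels_mset_set[OF labels_eq], of i j]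
      e ij lroot_eq_one by auto
  then have "j \<in> {2..k}"
    using labels_eq by auto
  then show "e \<in> {(parent_fun k T j, j) | j. j \<in> {2..k}}"
    using edge_source_unique[OF distinct_labels_mset_set[OF labels_eq]] parent_fun_edge e ij by blast
qed (auto intro: parent_fun_edge)

lemma parent_fun_in_PiE: "parent_fun k T \<in> (\<Pi>\<^sub>E j\<in>{2..k}. {1..<j})"
proof -
  have "parent_fun k T j \<in> {1..<j}" if "j \<in> {2..k}" for j
    using edges_in_labels[OF parent_fun_edge[OF that]] increasing_edge[OF incr parent_fun_edge[OF that]]
      labels_eq by auto
  then show ?thesis
    unfolding parent_fun_def by auto
qed

end

lemma prod_pred_atLeastAtMost_two: "(\<Prod>j\<in>{2..k}. j - 1) = fact (k - 1)"
proof -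
  have "(\<Prod>j\<in>{2..k}. j - 1) = (\<Prod>i\<in>{1..k - 1}. i)"
    by (rule prod.reindex_bij_witness[of _ Suc "\<lambda>j. j - 1"]) auto
  then show ?thesis
    by (simp add: fact_prod)
qed

lemma inj_on_parent_fun: "inj_on (parent_fun k) {T. increasing T \<and> labels T = mset_set {1..k}}"
proof (rule inj_onI)
  fix T1 T2
  assume "T1 \<in> {T. increasing T \<and> labels T = mset_set {1..k}}"
    and "T2 \<in> {T. increasing T \<and> labels T = mset_set {1..k}}"
    and "parent_fun k T1 = parent_fun k T2"
  then show "T1 = T2"
    using distinct_labels_mset_set[of T1] distinct_labels_mset_set[of T2]
      lroot_eq_one[of T1 k] lroot_eq_one[of T2 k]
      edges_eq_parent_fun[of T1 k] edges_eq_parent_fun[of T2 k]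
    by (intro distinct_labels_tree_eqI) auto
qed

lemma parent_fun_image_subset:
  "parent_fun k ` {T. increasing T \<and> labels T = mset_set {1..k}} \<subseteq> (\<Pi>\<^sub>E j\<in>{2..k}. {1..<j})"
  using parent_fun_in_PiE by auto

lemma finite_increasing_trees: "finite {T. increasing T \<and> labels T = mset_set {1..k}}"
  using finite_subset[OF parent_fun_image_subset finite_PiE] inj_on_parent_fun
  by (auto dest: finite_imageD)

lemma card_increasing_trees_le_fact:
  "card {T. increasing T \<and> labels T = mset_set {1..k}} \<le> fact (k - 1)"
proof -
  have "card {T. increasing T \<and> labels T = mset_set {1..k}} \<le> card (\<Pi>\<^sub>E j\<in>{2..k}. {1..<j})"
    using card_inj_on_le[OF inj_on_parent_fun parent_fun_image_subset] by (simp add: finite_PiE)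
  also have "\<dots> = fact (k - 1)"
    using prod_pred_atLeastAtMost_two by (simp add: card_PiE)
  finally show ?thesis .
qed

lemma ex_increasing_labelling_list:
  assumes "\<forall>x\<in>set xs. \<forall>n. \<exists>T. shape T = x \<and> increasing T \<and> labels T = mset_set {n..<n + psize x} \<and> lroot T = n"
  shows "\<exists>Ts. map shape Ts = xs \<and> (\<forall>T\<in>set Ts. increasing T \<and> n \<le> lroot T) \<and>
    sum_list (map labels Ts) = mset_set {n..<n + sum_list (map psize xs)}"
  using assms
proof (induction xs arbitrary: n)
  case (Cons x xs)
  obtain T where T: "shape T = x" "increasing T" "labels T = mset_set {n..<n + psize x}" "lroot T = n"
    using Cons.prems by auto
  obtain Ts where Ts: "map shape Ts = xs" "\<forall>T\<in>set Ts. increasing T \<and> n + psize x \<le> lroot T"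
    "sum_list (map labels Ts) = mset_set {n + psize x..<n + psize x + sum_list (map psize xs)}"
    using Cons by fastforce
  have "mset_set {n..<n + psize x} + mset_set {n + psize x..<n + psize x + sum_list (map psize xs)}
      = mset_set ({n..<n + psize x} \<union> {n + psize x..<n + psize x + sum_list (map psize xs)})"
    by (rule mset_set_Union[symmetric]) auto
  also have "{n..<n + psize x} \<union> {n + psize x..<n + psize x + sum_list (map psize xs)}
      = {n..<n + sum_list (map psize (x # xs))}"
    by auto
  finally have "sum_list (map labels (T # Ts)) = mset_set {n..<n + sum_list (map psize (x # xs))}"
    using T(3) Ts(3) by simp
  with T Ts show ?case
    by (intro exI[of _ "T # Ts"]) auto
qed simp

lemma ex_increasing_labelling:
  "\<exists>T. shape T = t \<and> increasing T \<and> labels T = mset_set {n..<n + psize t} \<and> lroot T = n"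
proof (induction t arbitrary: n)
  case (PNode M)
  obtain xs where xs: "mset xs = M"
    using ex_mset by blast
  obtain Ts where Ts: "map shape Ts = xs" "\<forall>T\<in>set Ts. increasing T \<and> Suc n \<le> lroot T"
    "sum_list (map labels Ts) = mset_set {Suc n..<Suc n + sum_list (map psize xs)}"
    using ex_increasing_labelling_list[of xs "Suc n"] PNode.IH xs by auto
  have size: "psize (PNode M) = Suc (sum_list (map psize xs))"
    using xs by (auto simp: sum_mset_sum_list simp flip: mset_map)
  have "labels (LNode n (mset Ts)) = add_mset n (mset_set {Suc n..<Suc n + sum_list (map psize xs)})"
    using Ts(3) by (simp add: sum_mset_sum_list flip: mset_map)
  also have "\<dots> = mset_set (insert n {Suc n..<Suc n + sum_list (map psize xs)})"
    by simp
  also have "insert n {Suc n..<Suc n + sum_list (map psize xs)} = {n..<n + psize (PNode M)}"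
    using size by auto
  finally show ?case
    using Ts xs by (intro exI[of _ "LNode n (mset Ts)"]) (auto simp flip: mset_map)
qed

lemma num_incr_labellings_pos: "0 < num_incr_labellings t"
proof -
  let ?S = "{T. shape T = t \<and> increasing T \<and> labels T = mset_set {1..psize t}}"
  have "finite ?S"
    by (rule finite_subset[OF _ finite_increasing_trees[of "psize t"]]) auto
  moreover obtain T where "shape T = t" "increasing T" "labels T = mset_set {1..<1 + psize t}"
    using ex_increasing_labelling by blast
  then have "T \<in> ?S"
    by (simp add: atLeastLessThanSuc_atLeastAtMost)
  ultimately show ?thesis
    unfolding num_incr_labellings_def using card_gt_0_iff by blast
qed

lemma num_incr_labellings_le_fact: "num_incr_labellings t \<le> fact (psize t - 1)"
  unfolding num_incr_labellings_def
  by (rule order_trans[OF card_mono[OF finite_increasing_trees] card_increasing_trees_le_fact]) auto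

lemma w_pos: "0 < w t"
  unfolding w_def using num_incr_labellings_pos[of t] by simp

lemma w_le_inverse_psize: "w t \<le> 1 / psize t"
proof -
  have "0 < psize t"
    by (cases t) simp
  then have "fact (psize t) = real (psize t) * fact (psize t - 1)"
    by (simp add: fact_reduce)
  moreover have "real (num_incr_labellings t) \<le> fact (psize t - 1)"
    using num_incr_labellings_le_fact[of t] by (metis of_nat_fact of_nat_le_iff)
  ultimately show ?thesis
    unfolding w_def using \<open>0 < psize t\<close> by (simp add: field_simps)
qed

section \<open>The root of the integral equation\<close>

definition exp_power_integral :: "real \<Rightarrow> nat \<Rightarrow> real \<Rightarrow> real" where
  "exp_power_integral a k r = integral {0..r} (\<lambda>v. exp (- a * v ^ k))"

lemma exp_neg_power_integrable: "(\<lambda>v::real. exp (- a * v ^ k)) integrable_on {r..s}"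
  by (intro integrable_continuous_real continuous_intros)

lemma exp_power_integral_combine:
  assumes "0 \<le> r" "r \<le> s"
  shows "exp_power_integral a k s = exp_power_integral a k r + integral {r..s} (\<lambda>v. exp (- a * v ^ k))"
  unfolding exp_power_integral_def
  using Henstock_Kurzweil_Integration.integral_combine[OF assms exp_neg_power_integrable] by simp

lemma integral_exp_neg_power_bounds:
  fixes a r s :: real
  assumes "0 \<le> a" "0 \<le> r" "r \<le> s"
  shows "(s - r) * exp (- a * s ^ k) \<le> integral {r..s} (\<lambda>v. exp (- a * v ^ k))"
    and "integral {r..s} (\<lambda>v. exp (- a * v ^ k)) \<le> s - r"
proof -
  have "integral {r..s} (\<lambda>_. exp (- a * s ^ k)) \<le> integral {r..s} (\<lambda>v. exp (- a * v ^ k))"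
    using assms by (intro integral_le exp_neg_power_integrable)
      (auto intro!: integrable_continuous_real continuous_intros mult_left_mono power_mono)
  then show "(s - r) * exp (- a * s ^ k) \<le> integral {r..s} (\<lambda>v. exp (- a * v ^ k))"
    using assms by simp
  have "integral {r..s} (\<lambda>v. exp (- a * v ^ k)) \<le> integral {r..s} (\<lambda>_. 1)"
    using assms by (intro integral_le exp_neg_power_integrable) auto
  then show "integral {r..s} (\<lambda>v. exp (- a * v ^ k)) \<le> s - r"
    using assms by simp
qed

lemma exp_power_integral_strict_mono:
  assumes "0 \<le> a" "0 \<le> r" "r < s"
  shows "exp_power_integral a k r < exp_power_integral a k s"
proof -
  have "0 < (s - r) * exp (- a * s ^ k)"
    using assms by simp
  then show ?thesis
    using exp_power_integral_combine[of r s a k] integral_exp_neg_power_bounds(1)[of a r s k] assms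
    by linarith
qed

lemma has_integral_one_minus_power:
  fixes c :: real
  shows "((\<lambda>v. 1 - c * v ^ k) has_integral (1 - c / (real k + 1))) {0..1}"
proof -
  have "((\<lambda>v. v - c * v ^ Suc k / real (Suc k)) has_real_derivative 1 - c * x ^ k) (at x within {0..1})"
    for x :: real
    by (auto intro!: derivative_eq_intros simp del: of_nat_Suc) (cases k; simp add: field_simps)
  from fundamental_theorem_of_calculus[OF _ this[unfolded has_real_derivative_iff_has_vector_derivative]]
  show ?thesis by (simp add: add.commute)
qed

lemma exp_neg_le_one_minus_mult_exp:
  fixes x a :: real
  assumes "0 \<le> x" "x \<le> a"
  shows "exp (- x) \<le> 1 - x * exp (- a)"
proof -
  have "exp (- x) * (1 + x) \<le> 1"
    using mult_left_mono[OF exp_ge_add_one_self[of x], of "exp (- x)"] by (simp flip: exp_add)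
  moreover have "x * exp (- a) \<le> x * exp (- x)"
    using assms by (intro mult_left_mono) auto
  ultimately show ?thesis by (simp add: algebra_simps)
qed

lemma one_minus_le_exp_neg: "1 - x \<le> exp (- x :: real)"
  using exp_ge_add_one_self[of "- x"] by simp

lemma exp_power_integral_one_bounds:
  assumes "0 \<le> a"
  shows "1 - a / (real k + 1) \<le> exp_power_integral a k 1"
    and "exp_power_integral a k 1 \<le> 1 - a * (1 - a) / (real k + 1)"
proof -
  have "integral {0..1} (\<lambda>v. 1 - a * v ^ k) \<le> exp_power_integral a k 1"
    unfolding exp_power_integral_def
    using has_integral_one_minus_power[of a k] one_minus_le_exp_neg
    by (intro integral_le exp_neg_power_integrable) auto
  then show "1 - a / (real k + 1) \<le> exp_power_integral a k 1"
    using has_integral_one_minus_power integral_unique by metis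
  have "exp (- a * v ^ k) \<le> 1 - a * exp (- a) * v ^ k" if "v \<in> {0..1}" for v :: real
  proof -
    have "a * v ^ k \<le> a"
      using that assms by (simp add: mult_left_le power_le_one)
    then show ?thesis
      using exp_neg_le_one_minus_mult_exp[of "a * v ^ k" a] that assms by (simp add: algebra_simps)
  qed
  then have "exp_power_integral a k 1 \<le> integral {0..1} (\<lambda>v. 1 - a * exp (- a) * v ^ k)"
    unfolding exp_power_integral_def
    using has_integral_one_minus_power[of "a * exp (- a)" k]
    by (intro integral_le exp_neg_power_integrable) auto
  also have "\<dots> = 1 - a * exp (- a) / (real k + 1)"
    using has_integral_one_minus_power integral_unique by metis
  also have "\<dots> \<le> 1 - a * (1 - a) / (real k + 1)"
    using one_minus_le_exp_neg[of a] assms by (intro diff_left_mono divide_right_mono mult_left_mono) auto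
  finally show "exp_power_integral a k 1 \<le> 1 - a * (1 - a) / (real k + 1)" .
qed

lemma exp_neg_power_ge_one_minus_two:
  fixes a r :: real
  assumes "0 \<le> a" "a \<le> 1 / 4" "0 < k" "0 \<le> r" "r \<le> 1 + 2 * a / k"
  shows "1 - 2 * a \<le> exp (- a * r ^ k)"
proof -
  have "r \<le> exp (2 * a / k)"
    using assms(5) exp_ge_add_one_self[of "2 * a / k"] by linarith
  then have "r ^ k \<le> exp (2 * a / k) ^ k"
    using assms by (intro power_mono) auto
  also have "\<dots> = exp (2 * a)"
    using assms by (simp flip: exp_of_nat_mult)
  also have "\<dots> \<le> 2"
  proof -
    have "exp (2 * a) * (1 - 2 * a) \<le> 1"
      using mult_left_mono[OF one_minus_le_exp_neg[of "2 * a"], of "exp (2 * a)"]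
      by (simp flip: exp_add)
    moreover have "exp (2 * a) * (1 / 2) \<le> exp (2 * a) * (1 - 2 * a)"
      using assms by (intro mult_left_mono) auto
    ultimately show ?thesis by linarith
  qed
  finally have "a * r ^ k \<le> 2 * a"
    using assms mult_left_mono by fastforce
  then show ?thesis
    using one_minus_le_exp_neg[of "a * r ^ k"] by simp
qed

lemma exp_power_integral_gt_one:
  assumes "0 < a" "a \<le> 1 / 4" "0 < k"
  shows "1 < exp_power_integral a k (1 + 2 * a / k)"
proof -
  let ?R = "1 + 2 * a / k"
  have "(?R - 1) * (1 - 2 * a) \<le> (?R - 1) * exp (- a * ?R ^ k)"
    using assms exp_neg_power_ge_one_minus_two[of a k ?R] by (intro mult_left_mono) auto
  also have "\<dots> \<le> integral {1..?R} (\<lambda>v. exp (- a * v ^ k))"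
    using assms by (intro integral_exp_neg_power_bounds) auto
  finally have "2 * a * (1 - 2 * a) / k \<le> exp_power_integral a k ?R - exp_power_integral a k 1"
    using exp_power_integral_combine[of 1 ?R a k] assms by simp
  moreover have "a / (real k + 1) < a / k"
    using assms by (intro divide_strict_left_mono) auto
  moreover have "a \<le> 2 * a * (1 - 2 * a)"
    using mult_right_mono[of "4 * a" 1 a] assms by (simp add: algebra_simps)
  then have "a / k \<le> 2 * a * (1 - 2 * a) / k"
    by (intro divide_right_mono) auto
  ultimately show ?thesis
    using exp_power_integral_one_bounds(1)[of a k] assms by linarith
qed

lemma exp_power_integral_eq_one:
  assumes "0 < a" "a \<le> 1 / 4" "0 < k"
  obtains \<rho> where "{r. 0 < r \<and> exp_power_integral a k r = 1} = {\<rho>}"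
    and "a * (1 - a) / (real k + 1) \<le> \<rho> - 1"
    and "(\<rho> - 1) * (1 - 2 * a) \<le> a / (real k + 1)"
proof -
  define F where "F = exp_power_integral a k"
  define R where "R = 1 + 2 * a / k"
  have "0 < a * (1 - a) / (real k + 1)"
    using assms by simp
  then have F1: "1 - a / (real k + 1) \<le> F 1" "F 1 < 1"
    using exp_power_integral_one_bounds[of a k] assms unfolding F_def by linarith+
  have "continuous_on {1..R} F"
    unfolding F_def exp_power_integral_def
    by (rule continuous_on_subset[OF indefinite_integral_continuous_1[OF exp_neg_power_integrable]])
      auto
  moreover have "1 < F R"
    using exp_power_integral_gt_one[OF assms] by (simp add: F_def R_def)
  moreover have "1 \<le> R"
    using assms by (simp add: R_def)
  ultimately obtain \<rho> where \<rho>: "1 \<le> \<rho>" "\<rho> \<le> R" "F \<rho> = 1"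
    using IVT'[of F 1 1 R] F1 by auto
  have "1 < \<rho>"
    using \<rho> F1 by (cases "\<rho> = 1") auto
  have "r = \<rho>" if "0 < r" "F r = 1" for r
    using exp_power_integral_strict_mono[of a r \<rho> k] exp_power_integral_strict_mono[of a \<rho> r k]
      that \<rho> \<open>1 < \<rho>\<close> assms unfolding F_def by (cases r \<rho> rule: linorder_cases) auto
  then have roots: "{r. 0 < r \<and> F r = 1} = {\<rho>}"
    using \<rho> \<open>1 < \<rho>\<close> by auto
  have gap: "F \<rho> - F 1 = integral {1..\<rho>} (\<lambda>v. exp (- a * v ^ k))"
    using exp_power_integral_combine[of 1 \<rho> a k] \<rho> by (simp add: F_def)
  have "integral {1..\<rho>} (\<lambda>v. exp (- a * v ^ k)) \<le> \<rho> - 1"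
    using integral_exp_neg_power_bounds(2)[of a 1 \<rho> k] assms \<rho> by simp
  then have lower: "a * (1 - a) / (real k + 1) \<le> \<rho> - 1"
    using gap \<rho>(3) exp_power_integral_one_bounds(2)[of a k] assms by (simp add: F_def)
  have "(\<rho> - 1) * (1 - 2 * a) \<le> (\<rho> - 1) * exp (- a * \<rho> ^ k)"
    using \<rho> assms exp_neg_power_ge_one_minus_two[of a k \<rho>] by (intro mult_left_mono) (auto simp: R_def)
  also have "\<dots> \<le> integral {1..\<rho>} (\<lambda>v. exp (- a * v ^ k))"
    using integral_exp_neg_power_bounds(1)[of a 1 \<rho> k] assms \<rho> by simp
  finally have "(\<rho> - 1) * (1 - 2 * a) \<le> a / (real k + 1)"
    using gap \<rho>(3) F1(1) by linarith
  with roots lower show ?thesis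
    using that unfolding F_def by blast
qed

lemma ratio_ge_of_lower_bound:
  fixes a e k :: real
  assumes "0 < a" "a * k \<le> 1" "4 \<le> k" "a * (1 - a) \<le> e * (k + 1)"
  shows "1 - 3 / k \<le> e * k / a"
proof -
  have "a * (k - 1) \<le> a * (1 - a) * k"
    using assms by (simp add: algebra_simps)
  also have "\<dots> \<le> e * (k + 1) * k"
    using assms by (intro mult_right_mono) auto
  finally have "(k - 1) / (k + 1) \<le> e * k / a"
    using assms by (simp add: field_simps)
  moreover have "1 - 3 / k \<le> (k - 1) / (k + 1)"
    using assms by (simp add: field_simps)
  ultimately show ?thesis
    by linarith
qed

lemma ratio_le_of_upper_bound:
  fixes a e k :: real
  assumes "0 < a" "a * k \<le> 1" "4 \<le> k" "0 \<le> e" "e * (1 - 2 * a) * (k + 1) \<le> a"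
  shows "e * k / a \<le> 1 + 3 / k"
proof -
  have pos: "0 < (k - 2) * (k + 1)"
    using assms by simp
  have "k - 2 \<le> (1 - 2 * a) * k"
    using assms by (simp add: algebra_simps)
  then have "e * (k - 2) * (k + 1) \<le> e * ((1 - 2 * a) * k) * (k + 1)"
    using assms by (intro mult_left_mono mult_right_mono) auto
  also have "\<dots> = (e * (1 - 2 * a) * (k + 1)) * k"
    by (simp add: ac_simps)
  also have "\<dots> \<le> a * k"
    using assms by (intro mult_right_mono) auto
  finally have "e \<le> a * k / ((k - 2) * (k + 1))"
    using pos by (simp add: pos_le_divide_eq mult.assoc)
  then have "e * k / a \<le> a * k / ((k - 2) * (k + 1)) * k / a"
    using assms by (intro divide_right_mono mult_right_mono) auto
  also have "\<dots> = k * k / ((k - 2) * (k + 1))"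
    using assms by simp
  also have "\<dots> \<le> (k + 3) / k"
  proof -
    have "4 * 3 \<le> k * (2 * k - 5)"
      using assms by (intro mult_mono) auto
    then have "k * k * k \<le> (k + 3) * ((k - 2) * (k + 1))"
      by (simp add: algebra_simps)
    then show ?thesis
      using pos assms by (simp add: divide_simps mult.commute)
  qed
  also have "\<dots> = 1 + 3 / k"
    using assms by (simp add: field_simps)
  finally show ?thesis .
qed

lemma exp_power_integral_root_relative_error:
  assumes "0 < a" "a \<le> 1 / k" "4 \<le> k"
  shows "\<exists>r>0. exp_power_integral a k r = 1"
    and "\<bar>(Inf {r. 0 < r \<and> exp_power_integral a k r = 1} - 1) / (a / k) - 1\<bar> \<le> 3 / k"
proof -
  have "a * k \<le> 1"
    using assms by (simp add: field_simps)
  moreover have "a * 4 \<le> a * k"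
    using assms by (intro mult_left_mono) auto
  ultimately have "a \<le> 1 / 4"
    by simp
  then obtain \<rho> where roots: "{r. 0 < r \<and> exp_power_integral a k r = 1} = {\<rho>}"
    and lower: "a * (1 - a) / (real k + 1) \<le> \<rho> - 1"
    and upper: "(\<rho> - 1) * (1 - 2 * a) \<le> a / (real k + 1)"
    using exp_power_integral_eq_one[of a k] assms by auto
  show "\<exists>r>0. exp_power_integral a k r = 1"
    using roots by blast
  have "0 \<le> a * (1 - a) / (real k + 1)"
    using assms \<open>a \<le> 1 / 4\<close> by simp
  then have "0 \<le> \<rho> - 1"
    using lower by linarith
  moreover have "a * (1 - a) \<le> (\<rho> - 1) * (real k + 1)"
    using lower by (simp add: pos_divide_le_eq)
  moreover have "(\<rho> - 1) * (1 - 2 * a) * (real k + 1) \<le> a"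
    using upper by (simp add: pos_le_divide_eq)
  ultimately have "\<bar>(\<rho> - 1) * k / a - 1\<bar> \<le> 3 / k"
    using ratio_ge_of_lower_bound[of a k "\<rho> - 1"] ratio_le_of_upper_bound[of a k "\<rho> - 1"]
      assms \<open>a * k \<le> 1\<close> by (simp add: abs_le_iff)
  then show "\<bar>(Inf {r. 0 < r \<and> exp_power_integral a k r = 1} - 1) / (a / k) - 1\<bar> \<le> 3 / k"
    using roots by simp
qed

theorem corollary2p2:
  shows "\<forall>e>0. \<exists>K. \<forall>t. psize t \<ge> K \<longrightarrow>
    (\<exists>r>0. integral {0..r} (\<lambda>v. exp (- w t * v ^ psize t)) = 1) \<and>
    \<bar>(rho_tilde t - 1) / (w t / real (psize t)) - 1\<bar> < e"
proof (intro allI impI)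
  fix e :: real
  assume "0 < e"
  have "(\<exists>r>0. integral {0..r} (\<lambda>v. exp (- w t * v ^ psize t)) = 1) \<and>
      \<bar>(rho_tilde t - 1) / (w t / real (psize t)) - 1\<bar> < e"
    if K: "max 4 (nat \<lceil>3 / e\<rceil> + 1) \<le> psize t" for t
  proof -
    have "3 / e \<le> real (nat \<lceil>3 / e\<rceil>)"
      by (rule real_nat_ceiling_ge)
    with K have "3 / e < real (psize t)"
      by linarith
    then have small: "3 / real (psize t) < e"
      using \<open>0 < e\<close> K by (simp add: field_simps)
    have "4 \<le> psize t"
      using K by simp
    note root = exp_power_integral_root_relative_error[OF w_pos w_le_inverse_psize this,
        unfolded exp_power_integral_def]
    show ?thesis
      unfolding rho_tilde_def using root(1) le_less_trans[OF root(2) small] by blast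
  qed
  then show "\<exists>K. \<forall>t. psize t \<ge> K \<longrightarrow>
      (\<exists>r>0. integral {0..r} (\<lambda>v. exp (- w t * v ^ psize t)) = 1) \<and>
      \<bar>(rho_tilde t - 1) / (w t / real (psize t)) - 1\<bar> < e"
    by blast
qed

end
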